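(* Let $(X,T)$ be a CAM $G$-system and let $H\subseteq G$ be a finite index normal subgroup. If there exists $x\in X$ whose $H$-orbit is dense in $X$, then the restricted action of $H$ on $X$ is CAM.
   Context: Let $G$ be a countable discrete group. A topological $G$-system $(X,T)$ consists of a compact metric space $X$ and an action $T\colon G\to\mathrm{Homeo}(X)$, $g\mapsto T_g$. The system is topologically transitive if for all nonempty open $U,V\subseteq X$ there is $g\in G$ with $T_gU\cap V\neq\emptyset$; the action is faithful if $T_g=\mathrm{id}_X$ only when $g$ is the identity. A point is periodic if its $G$-orbit is finite. The system is chaotic almost minimal (CAM) if: (1) it is topologically transitive and the action is faithful; (2) the periodic points are dense in $X$; (3) every proper closed $T$-invariant subset of $X$ is finite. *)

theory Defs
  imports "HOL-Analysis.Analysis" "HOL-Algebra.Coset"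
begin

definition topsys :: "('g, 'm) monoid_scheme \<Rightarrow> 'a::metric_space set \<Rightarrow> ('g \<Rightarrow> 'a \<Rightarrow> 'a) \<Rightarrow> bool" where
  "topsys G X T \<longleftrightarrow> group G \<and> countable (carrier G) \<and> compact X \<and>
     (\<forall>g\<in>carrier G. homeomorphism X X (T g) (T (inv\<^bsub>G\<^esub> g))) \<and>
     (\<forall>x\<in>X. T \<one>\<^bsub>G\<^esub> x = x) \<and>
     (\<forall>g\<in>carrier G. \<forall>h\<in>carrier G. \<forall>x\<in>X. T (g \<otimes>\<^bsub>G\<^esub> h) x = T g (T h x))"

definition top_transitive :: "('g, 'm) monoid_scheme \<Rightarrow> 'a::metric_space set \<Rightarrow> ('g \<Rightarrow> 'a \<Rightarrow> 'a) \<Rightarrow> bool" where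
  "top_transitive G X T \<longleftrightarrow>
     (\<forall>U V. openin (top_of_set X) U \<and> openin (top_of_set X) V \<and> U \<noteq> {} \<and> V \<noteq> {} \<longrightarrow>
        (\<exists>g\<in>carrier G. T g ` U \<inter> V \<noteq> {}))"

definition faithful_action :: "('g, 'm) monoid_scheme \<Rightarrow> 'a set \<Rightarrow> ('g \<Rightarrow> 'a \<Rightarrow> 'a) \<Rightarrow> bool" where
  "faithful_action G X T \<longleftrightarrow> (\<forall>g\<in>carrier G. (\<forall>x\<in>X. T g x = x) \<longrightarrow> g = \<one>\<^bsub>G\<^esub>)"

definition orbit :: "('g, 'm) monoid_scheme \<Rightarrow> ('g \<Rightarrow> 'a \<Rightarrow> 'a) \<Rightarrow> 'a \<Rightarrow> 'a set" where
  "orbit G T x = (\<lambda>g. T g x) ` carrier G"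

definition periodic_points :: "('g, 'm) monoid_scheme \<Rightarrow> 'a set \<Rightarrow> ('g \<Rightarrow> 'a \<Rightarrow> 'a) \<Rightarrow> 'a set" where
  "periodic_points G X T = {x\<in>X. finite (orbit G T x)}"

definition invariant_set :: "('g, 'm) monoid_scheme \<Rightarrow> 'a set \<Rightarrow> ('g \<Rightarrow> 'a \<Rightarrow> 'a) \<Rightarrow> 'a set \<Rightarrow> bool" where
  "invariant_set G X T A \<longleftrightarrow> A \<subseteq> X \<and> (\<forall>g\<in>carrier G. T g ` A \<subseteq> A)"

definition CAM :: "('g, 'm) monoid_scheme \<Rightarrow> 'a::metric_space set \<Rightarrow> ('g \<Rightarrow> 'a \<Rightarrow> 'a) \<Rightarrow> bool" where
  "CAM G X T \<longleftrightarrow> topsys G X T \<and>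
     top_transitive G X T \<and> faithful_action G X T \<and>
     X \<subseteq> closure (periodic_points G X T) \<and>
     (\<forall>A. closed A \<and> invariant_set G X T A \<and> A \<noteq> X \<longrightarrow> finite A)"

end

theory Submission
  imports Defs
begin

text \<open>Restricting the action to H preserves faithfulness and the density of periodic points, and
the dense H-orbit gives transitivity. For almost minimality, let A be a closed H-invariant set.
Normality of H makes every translate T g A again H-invariant, and T g A depends only on the coset
H g; so the G-saturation of A is a finite union of closed sets, hence a closed G-invariant set.
Either it is a proper subset of X, hence finite, or it contains the point with dense H-orbit; then
some translate T g A, and therefore A itself, is all of X.\<close>

lemma topsys_in_space:
  assumes "topsys G X T" "g \<in> carrier G" "y \<in> X"
  shows "T g y \<in> X"
  using assms unfolding topsys_def homeomorphism_def by blast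

lemma topsys_group:
  assumes "topsys G X T"
  shows "group G"
  using assms unfolding topsys_def by blast

lemma topsys_one:
  assumes "topsys G X T" "y \<in> X"
  shows "T \<one>\<^bsub>G\<^esub> y = y"
  using assms unfolding topsys_def by blast

lemma topsys_mult:
  assumes "topsys G X T" "g \<in> carrier G" "h \<in> carrier G" "y \<in> X"
  shows "T (g \<otimes>\<^bsub>G\<^esub> h) y = T g (T h y)"
  using assms unfolding topsys_def by blast

lemma topsys_homeomorphism:
  assumes "topsys G X T" "g \<in> carrier G"
  shows "homeomorphism X X (T g) (T (inv\<^bsub>G\<^esub> g))"
  using assms unfolding topsys_def by blast

lemma topsys_inj_on:
  assumes "topsys G X T" "g \<in> carrier G"
  shows "inj_on (T g) X"
  using homeomorphism_apply1[OF topsys_homeomorphism[OF assms]] by (rule inj_on_inverseI)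

lemma topsys_closed_image:
  assumes "topsys G X T" "g \<in> carrier G" "closed A" "A \<subseteq> X"
  shows "closed (T g ` A)"
proof -
  have "continuous_on X (T g)"
    using topsys_homeomorphism[OF assms(1,2)] by (rule homeomorphism_cont1)
  hence "continuous_on A (T g)" using assms(4) by (rule continuous_on_subset)
  moreover have "compact X" using assms(1) unfolding topsys_def by blast
  hence "compact A" using assms(3,4) by (metis closed_Int_compact inf.absorb1)
  ultimately show ?thesis by (intro compact_imp_closed compact_continuous_image)
qed

lemma topsys_subgroup:
  assumes "topsys G X T" "subgroup H G"
  shows "topsys (G\<lparr>carrier := H\<rparr>) X T"
  unfolding topsys_def
proof (intro conjI ballI)
  have grp: "group G" using topsys_group[OF assms(1)] .
  have HG: "H \<subseteq> carrier G" using assms(2) by (rule subgroup.subset)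
  show "group (G\<lparr>carrier := H\<rparr>)" using subgroup.subgroup_is_group[OF assms(2) grp] .
  show "countable (carrier (G\<lparr>carrier := H\<rparr>))"
    using assms(1) countable_subset[OF HG] unfolding topsys_def by simp
  show "compact X" using assms(1) unfolding topsys_def by blast
  fix g assume g: "g \<in> carrier (G\<lparr>carrier := H\<rparr>)"
  have "inv\<^bsub>G\<lparr>carrier := H\<rparr>\<^esub> g = inv\<^bsub>G\<^esub> g"
    using group.m_inv_consistent[OF grp assms(2)] g by simp
  thus "homeomorphism X X (T g) (T (inv\<^bsub>G\<lparr>carrier := H\<rparr>\<^esub> g))"
    using topsys_homeomorphism[OF assms(1)] g HG by auto
next
  fix y assume "y \<in> X"
  thus "T \<one>\<^bsub>G\<lparr>carrier := H\<rparr>\<^esub> y = y" using topsys_one[OF assms(1)] by simp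
next
  fix g h y assume "g \<in> carrier (G\<lparr>carrier := H\<rparr>)" "h \<in> carrier (G\<lparr>carrier := H\<rparr>)" "y \<in> X"
  thus "T (g \<otimes>\<^bsub>G\<lparr>carrier := H\<rparr>\<^esub> h) y = T g (T h y)"
    using topsys_mult[OF assms(1)] subgroup.subset[OF assms(2)] by auto
qed

lemma top_transitive_if_dense_orbit:
  assumes "topsys G X T" "x \<in> X" "closure (orbit G T x) = X"
  shows "top_transitive G X T"
  unfolding top_transitive_def
proof (intro allI impI)
  fix U V assume UV: "openin (top_of_set X) U \<and> openin (top_of_set X) V \<and> U \<noteq> {} \<and> V \<noteq> {}"
  have orbit_meets: "\<exists>g\<in>carrier G. T g x \<in> W" if W: "openin (top_of_set X) W" "W \<noteq> {}" for W
  proof -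
    obtain S where S: "open S" "W = X \<inter> S" using W(1) by (meson openin_open)
    obtain w where w: "w \<in> W" using W(2) by blast
    hence "w \<in> closure (orbit G T x)" "w \<in> S" using S(2) assms(3) by simp_all
    then obtain z where "z \<in> orbit G T x" "z \<in> S"
      using S(1) closure_iff_nhds_not_empty[of w "orbit G T x"] by blast
    then obtain g where "g \<in> carrier G" "T g x \<in> S" unfolding orbit_def by blast
    moreover have "T g x \<in> X" using topsys_in_space[OF assms(1) \<open>g \<in> carrier G\<close> assms(2)] .
    ultimately show ?thesis using S(2) by blast
  qed
  obtain g1 where g1: "g1 \<in> carrier G" "T g1 x \<in> U" using orbit_meets UV by blast
  obtain g2 where g2: "g2 \<in> carrier G" "T g2 x \<in> V" using orbit_meets UV by blast
  interpret group G using topsys_group[OF assms(1)] .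
  let ?g = "g2 \<otimes>\<^bsub>G\<^esub> inv\<^bsub>G\<^esub> g1"
  have g: "?g \<in> carrier G" using g1(1) g2(1) by simp
  have "?g \<otimes>\<^bsub>G\<^esub> g1 = g2" using g1(1) g2(1) by (simp add: m_assoc)
  hence "T ?g (T g1 x) = T g2 x" using topsys_mult[OF assms(1) g g1(1) assms(2)] by simp
  hence "T g2 x \<in> T ?g ` U \<inter> V" using g1(2) g2(2) by (metis IntI image_eqI)
  thus "\<exists>g\<in>carrier G. T g ` U \<inter> V \<noteq> {}" using g by blast
qed

lemma faithful_action_restrict:
  assumes "faithful_action G X T" "H \<subseteq> carrier G"
  shows "faithful_action (G\<lparr>carrier := H\<rparr>) X T"
  using assms unfolding faithful_action_def by auto

lemma periodic_points_restrict:
  assumes "H \<subseteq> carrier G"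
  shows "periodic_points G X T \<subseteq> periodic_points (G\<lparr>carrier := H\<rparr>) X T"
  using assms unfolding periodic_points_def orbit_def
  by (auto intro: rev_finite_subset[OF _ image_mono])

lemma normal_invariant_translate:
  assumes "topsys G X T" "H \<lhd> G" "invariant_set (G\<lparr>carrier := H\<rparr>) X T A"
    and "h \<in> H" "g \<in> carrier G" "a \<in> A"
  shows "T h (T g a) \<in> T g ` A"
proof -
  interpret normal H G by (rule assms(2))
  let ?k = "inv\<^bsub>G\<^esub> g \<otimes>\<^bsub>G\<^esub> h \<otimes>\<^bsub>G\<^esub> g"
  have k: "?k \<in> H" using inv_op_closed1 assms(4,5) by blast
  have a: "a \<in> X" and inv_A: "T ?k a \<in> A"
    using assms(3,6) k unfolding invariant_set_def by auto
  have hG: "h \<in> carrier G" and kG: "?k \<in> carrier G" using assms(4) k subset by auto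
  have "T h (T g a) = T (h \<otimes>\<^bsub>G\<^esub> g) a"
    by (rule topsys_mult[OF assms(1) hG assms(5) a, symmetric])
  also have "h \<otimes>\<^bsub>G\<^esub> g = g \<otimes>\<^bsub>G\<^esub> ?k"
    using hG assms(5) by (simp add: m_assoc[symmetric])
  also have "T (g \<otimes>\<^bsub>G\<^esub> ?k) a = T g (T ?k a)"
    by (rule topsys_mult[OF assms(1) assms(5) kG a])
  finally show ?thesis using inv_A by simp
qed

lemma UN_rcoset_translate_eq:
  assumes "topsys G X T" "H \<lhd> G" "invariant_set (G\<lparr>carrier := H\<rparr>) X T A" "g \<in> carrier G"
  shows "(\<Union>g'\<in>H #>\<^bsub>G\<^esub> g. T g' ` A) = T g ` A"
proof (rule equalityI)
  interpret normal H G by (rule assms(2))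
  have AX: "A \<subseteq> X" using assms(3) unfolding invariant_set_def by blast
  show "(\<Union>g'\<in>H #>\<^bsub>G\<^esub> g. T g' ` A) \<subseteq> T g ` A"
  proof
    fix y assume "y \<in> (\<Union>g'\<in>H #>\<^bsub>G\<^esub> g. T g' ` A)"
    then obtain h a where h: "h \<in> H" "a \<in> A" "y = T (h \<otimes>\<^bsub>G\<^esub> g) a"
      unfolding r_coset_def by blast
    have "h \<in> carrier G" "a \<in> X" using h subset AX by auto
    hence "y = T h (T g a)" using h(3) by (simp add: topsys_mult[OF assms(1) _ assms(4)])
    thus "y \<in> T g ` A" using normal_invariant_translate[OF assms(1-3) h(1) assms(4) h(2)] by simp
  qed
  show "T g ` A \<subseteq> (\<Union>g'\<in>H #>\<^bsub>G\<^esub> g. T g' ` A)"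
    by (rule UN_upper[OF rcos_self[OF assms(4) subgroup_axioms]])
qed

definition saturation :: "('g, 'm) monoid_scheme \<Rightarrow> ('g \<Rightarrow> 'a \<Rightarrow> 'a) \<Rightarrow> 'a set \<Rightarrow> 'a set" where
  "saturation G T A = (\<Union>g\<in>carrier G. T g ` A)"

lemma saturation_invariant:
  assumes "topsys G X T" "A \<subseteq> X"
  shows "invariant_set G X T (saturation G T A)"
  unfolding invariant_set_def saturation_def
proof (intro conjI ballI)
  interpret group G using topsys_group[OF assms(1)] .
  show "(\<Union>g\<in>carrier G. T g ` A) \<subseteq> X" using topsys_in_space[OF assms(1)] assms(2) by blast
  fix g assume g: "g \<in> carrier G"
  show "T g ` (\<Union>g'\<in>carrier G. T g' ` A) \<subseteq> (\<Union>g'\<in>carrier G. T g' ` A)"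
  proof
    fix y assume "y \<in> T g ` (\<Union>g'\<in>carrier G. T g' ` A)"
    then obtain g' a where g'a: "g' \<in> carrier G" "a \<in> A" "y = T g (T g' a)" by blast
    hence "y = T (g \<otimes>\<^bsub>G\<^esub> g') a" using topsys_mult[OF assms(1) g g'a(1)] assms(2) by auto
    moreover have "g \<otimes>\<^bsub>G\<^esub> g' \<in> carrier G" using g g'a(1) by simp
    ultimately show "y \<in> (\<Union>g'\<in>carrier G. T g' ` A)" using g'a(2) by blast
  qed
qed

lemma subset_saturation:
  assumes "topsys G X T" "A \<subseteq> X"
  shows "A \<subseteq> saturation G T A"
proof
  fix a assume a: "a \<in> A"
  have "\<one>\<^bsub>G\<^esub> \<in> carrier G" using topsys_group[OF assms(1)] by (simp add: group.is_monoid)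
  moreover have "T \<one>\<^bsub>G\<^esub> a = a" using topsys_one[OF assms(1)] a assms(2) by blast
  ultimately show "a \<in> saturation G T A" using a unfolding saturation_def by (metis UN_iff image_eqI)
qed

lemma closed_saturation:
  assumes "topsys G X T" "H \<lhd> G" "finite (rcosets\<^bsub>G\<^esub> H)"
    and "invariant_set (G\<lparr>carrier := H\<rparr>) X T A" "closed A"
  shows "closed (saturation G T A)"
proof -
  interpret normal H G by (rule assms(2))
  have AX: "A \<subseteq> X" using assms(4) unfolding invariant_set_def by blast
  have "saturation G T A = (\<Union>C\<in>rcosets\<^bsub>G\<^esub> H. \<Union>g\<in>C. T g ` A)"
    unfolding saturation_def using rcosets_part_G[OF subgroup_axioms] by blast
  moreover have "closed (\<Union>g\<in>C. T g ` A)" if "C \<in> rcosets\<^bsub>G\<^esub> H" for C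
    using that UN_rcoset_translate_eq[OF assms(1,2,4)] topsys_closed_image[OF assms(1) _ assms(5) AX]
    unfolding RCOSETS_def by auto
  ultimately show ?thesis using assms(3) by (simp add: closed_UN)
qed

lemma invariant_eq_if_saturation_meets_dense_orbit:
  assumes "topsys G X T" "H \<lhd> G" "closure (orbit (G\<lparr>carrier := H\<rparr>) T x) = X"
    and "invariant_set (G\<lparr>carrier := H\<rparr>) X T A" "closed A" "x \<in> saturation G T A"
  shows "A = X"
proof -
  have AX: "A \<subseteq> X" using assms(4) unfolding invariant_set_def by blast
  obtain g a where g: "g \<in> carrier G" "a \<in> A" "x = T g a"
    using assms(6) unfolding saturation_def by blast
  have "orbit (G\<lparr>carrier := H\<rparr>) T x \<subseteq> T g ` A"
    unfolding orbit_def using g normal_invariant_translate[OF assms(1,2,4) _ g(1,2)] by auto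
  hence X_sub: "X \<subseteq> T g ` A"
    using closure_minimal topsys_closed_image[OF assms(1) g(1) assms(5) AX] assms(3) by metis
  have "X \<subseteq> A"
  proof
    fix y assume y: "y \<in> X"
    hence "T g y \<in> T g ` A" using X_sub topsys_in_space[OF assms(1) g(1)] by blast
    then obtain b where "b \<in> A" "T g y = T g b" by blast
    thus "y \<in> A" using inj_onD[OF topsys_inj_on[OF assms(1) g(1)]] y AX by blast
  qed
  thus ?thesis using AX by blast
qed

lemma almost_minimal_normal_restrict:
  assumes "CAM G X T" "H \<lhd> G" "finite (rcosets\<^bsub>G\<^esub> H)"
    and "x \<in> X" "closure (orbit (G\<lparr>carrier := H\<rparr>) T x) = X"
    and "closed A" "invariant_set (G\<lparr>carrier := H\<rparr>) X T A" "A \<noteq> X"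
  shows "finite A"
proof -
  have sys: "topsys G X T" using assms(1) unfolding CAM_def by blast
  have AX: "A \<subseteq> X" using assms(7) unfolding invariant_set_def by blast
  have "saturation G T A \<noteq> X"
    using invariant_eq_if_saturation_meets_dense_orbit[OF sys assms(2,5,7,6)] assms(4,8) by blast
  hence "finite (saturation G T A)"
    using assms(1) closed_saturation[OF sys assms(2,3,7,6)] saturation_invariant[OF sys AX]
    unfolding CAM_def by blast
  thus ?thesis using subset_saturation[OF sys AX] by (rule finite_subset[rotated])
qed

theorem corollary3p6:
  fixes G :: "('g, 'm) monoid_scheme" and X :: "'a::metric_space set" and T :: "'g \<Rightarrow> 'a \<Rightarrow> 'a"
    and H :: "'g set"
  assumes "CAM G X T"
    and "H \<lhd> G"
    and "finite (rcosets\<^bsub>G\<^esub> H)"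
    and "x \<in> X" and "closure (orbit (G\<lparr>carrier := H\<rparr>) T x) = X"
  shows "CAM (G\<lparr>carrier := H\<rparr>) X T"
proof -
  have sys: "topsys G X T" and faithful: "faithful_action G X T"
    and dense: "X \<subseteq> closure (periodic_points G X T)"
    using assms(1) unfolding CAM_def by blast+
  have HG: "H \<subseteq> carrier G" using normal_imp_subgroup[OF assms(2)] by (rule subgroup.subset)
  have sys_H: "topsys (G\<lparr>carrier := H\<rparr>) X T"
    using topsys_subgroup[OF sys normal_imp_subgroup[OF assms(2)]] .
  have "X \<subseteq> closure (periodic_points (G\<lparr>carrier := H\<rparr>) X T)"
    using dense closure_mono[OF periodic_points_restrict[OF HG]] by (rule order_trans)
  then show ?thesis
    unfolding CAM_def
    using sys_H top_transitive_if_dense_orbit[OF sys_H assms(4,5)] faithful_action_restrict[OF faithful HG]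
      almost_minimal_normal_restrict[OF assms]
    by blast
qed

end
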